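(* Let $\omega$ be a rectilinearly-convex obstacle and let $S^*$ be a minimum skeleton for $\omega$. Then $|S^*|=1$ if and only if $\omega$ has a diagonal.
   Context: An obstacle $\omega$ is a simple polygon in $\mathbb{R}^2$ (a closed, bounded polygonal region without holes whose boundary does not intersect itself), assumed in general position (no three of its vertices are collinear); vertices and edges of $\omega$ are those of its boundary. $\omega$ is rectilinear if each edge is horizontal or vertical, and a rectilinear obstacle is rectilinearly-convex if any two points of $\omega$ can be joined by a shortest rectilinear path (made of horizontal and vertical segments, of minimum $\ell_1$ length) contained in $\omega$. A corner point of a rectilinear path is a point where a horizontal and a vertical segment of the path meet. A set $S$ of closed line segments is inside $\omega$ if the union of its elements is contained in $\omega$. Such an $S$ is a skeleton for $\omega$ if for every pair of points $p,q$ not in the interior of $\omega$ such that every shortest rectilinear path between $p$ and $q$ with at most one corner point meets the interior of $\omega$, each such path intersects some element of $S$; a minimum skeleton is one with the fewest segments, and $|S|$ is the number of segments. $B(\omega)$ is the smallest closed axis-parallel rectangle containing $\omega$; the extreme edges are the edges of $\omega$ lying on the boundary of $B(\omega)$ (exactly four for a rectilinearly-convex obstacle); an extreme corner is a vertex of $\omega$ that is a common endpoint of two extreme edges (equivalently, a corner of $B(\omega)$ belonging to $\omega$). Two extreme corners are opposite if they are diagonally opposite corners of $B(\omega)$. A diagonal of $\omega$ is a line segment contained in $\omega$ joining a pair of opposite extreme corners. *)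

theory Defs
  imports "HOL-Analysis.Analysis"
begin

type_synonym pt = "real \<times> real"

definition pvert :: "pt list \<Rightarrow> nat \<Rightarrow> pt" where
  "pvert vs i = vs ! (i mod length vs)"

definition pedge :: "pt list \<Rightarrow> nat \<Rightarrow> pt set" where
  "pedge vs i = closed_segment (pvert vs i) (pvert vs (Suc i))"

definition simple_polygon :: "pt list \<Rightarrow> bool" where
  "simple_polygon vs \<longleftrightarrow> length vs \<ge> 3 \<and> distinct vs \<and>
     (\<forall>i < length vs. \<forall>j < length vs. i \<noteq> j \<longrightarrow>
        (if j = Suc i mod length vs then pedge vs i \<inter> pedge vs j = {pvert vs j}
         else if i = Suc j mod length vs then pedge vs i \<inter> pedge vs j = {pvert vs i}
         else pedge vs i \<inter> pedge vs j = {}))"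

definition polygon_boundary :: "pt list \<Rightarrow> pt set" where
  "polygon_boundary vs = (\<Union>i < length vs. pedge vs i)"

definition polygon_region :: "pt list \<Rightarrow> pt set" where
  "polygon_region vs = polygon_boundary vs \<union> inside (polygon_boundary vs)"

definition general_position :: "pt list \<Rightarrow> bool" where
  "general_position vs \<longleftrightarrow>
     (\<forall>a\<in>set vs. \<forall>b\<in>set vs. \<forall>c\<in>set vs.
        a \<noteq> b \<and> b \<noteq> c \<and> a \<noteq> c \<longrightarrow> \<not> collinear {a, b, c})"

definition axis_parallel :: "pt \<Rightarrow> pt \<Rightarrow> bool" where
  "axis_parallel a b \<longleftrightarrow> fst a = fst b \<or> snd a = snd b"

definition rectilinear_vertices :: "pt list \<Rightarrow> bool" where
  "rectilinear_vertices vs \<longleftrightarrow>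
     (\<forall>i < length vs. axis_parallel (pvert vs i) (pvert vs (Suc i)))"

definition rectilinear_obstacle :: "pt set \<Rightarrow> bool" where
  "rectilinear_obstacle \<omega> \<longleftrightarrow>
     (\<exists>vs. simple_polygon vs \<and> general_position vs \<and> rectilinear_vertices vs
           \<and> \<omega> = polygon_region vs)"

definition rect_path :: "pt list \<Rightarrow> bool" where
  "rect_path ps \<longleftrightarrow> ps \<noteq> [] \<and>
     (\<forall>i < length ps - 1. ps ! i \<noteq> ps ! Suc i \<and> axis_parallel (ps ! i) (ps ! Suc i))"

definition path_set :: "pt list \<Rightarrow> pt set" where
  "path_set ps = set ps \<union> (\<Union>i < length ps - 1. closed_segment (ps ! i) (ps ! Suc i))"

definition l1_dist :: "pt \<Rightarrow> pt \<Rightarrow> real" where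
  "l1_dist a b = \<bar>fst a - fst b\<bar> + \<bar>snd a - snd b\<bar>"

definition path_len :: "pt list \<Rightarrow> real" where
  "path_len ps = (\<Sum>i < length ps - 1. l1_dist (ps ! i) (ps ! Suc i))"

definition horizontal :: "pt \<Rightarrow> pt \<Rightarrow> bool" where
  "horizontal a b \<longleftrightarrow> snd a = snd b"

definition corner_points :: "pt list \<Rightarrow> pt set" where
  "corner_points ps = {ps ! i | i. 0 < i \<and> i < length ps - 1 \<and>
      horizontal (ps ! (i - 1)) (ps ! i) \<noteq> horizontal (ps ! i) (ps ! Suc i)}"

definition rect_path_between :: "pt \<Rightarrow> pt \<Rightarrow> pt list \<Rightarrow> bool" where
  "rect_path_between p q ps \<longleftrightarrow> rect_path ps \<and> hd ps = p \<and> last ps = q"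

definition shortest_rect_path :: "pt \<Rightarrow> pt \<Rightarrow> pt list \<Rightarrow> bool" where
  "shortest_rect_path p q ps \<longleftrightarrow> rect_path_between p q ps \<and>
     (\<forall>ps'. rect_path_between p q ps' \<longrightarrow> path_len ps \<le> path_len ps')"

definition rect_convex :: "pt set \<Rightarrow> bool" where
  "rect_convex \<omega> \<longleftrightarrow>
     (\<forall>p\<in>\<omega>. \<forall>q\<in>\<omega>. \<exists>ps. shortest_rect_path p q ps \<and> path_set ps \<subseteq> \<omega>)"

definition rect_convex_obstacle :: "pt set \<Rightarrow> bool" where
  "rect_convex_obstacle \<omega> \<longleftrightarrow> rectilinear_obstacle \<omega> \<and> rect_convex \<omega>"

definition is_segment :: "pt set \<Rightarrow> bool" where
  "is_segment s \<longleftrightarrow> (\<exists>a b. a \<noteq> b \<and> s = closed_segment a b)"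

definition short_L_path :: "pt \<Rightarrow> pt \<Rightarrow> pt list \<Rightarrow> bool" where
  "short_L_path p q ps \<longleftrightarrow> shortest_rect_path p q ps \<and> card (corner_points ps) \<le> 1"

definition skeleton :: "pt set \<Rightarrow> pt set set \<Rightarrow> bool" where
  "skeleton \<omega> S \<longleftrightarrow> finite S \<and> (\<forall>s\<in>S. is_segment s) \<and> \<Union>S \<subseteq> \<omega> \<and>
     (\<forall>p q. p \<notin> interior \<omega> \<and> q \<notin> interior \<omega> \<and>
        (\<forall>ps. short_L_path p q ps \<longrightarrow> path_set ps \<inter> interior \<omega> \<noteq> {}) \<longrightarrow>
        (\<forall>ps. short_L_path p q ps \<longrightarrow> (\<exists>s\<in>S. path_set ps \<inter> s \<noteq> {})))"

definition minimum_skeleton :: "pt set \<Rightarrow> pt set set \<Rightarrow> bool" where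
  "minimum_skeleton \<omega> S \<longleftrightarrow> skeleton \<omega> S \<and> (\<forall>S'. skeleton \<omega> S' \<longrightarrow> card S \<le> card S')"

definition xmin :: "pt set \<Rightarrow> real" where "xmin \<omega> = Inf (fst ` \<omega>)"
definition xmax :: "pt set \<Rightarrow> real" where "xmax \<omega> = Sup (fst ` \<omega>)"
definition ymin :: "pt set \<Rightarrow> real" where "ymin \<omega> = Inf (snd ` \<omega>)"
definition ymax :: "pt set \<Rightarrow> real" where "ymax \<omega> = Sup (snd ` \<omega>)"

definition opposite_extreme_corners :: "pt set \<Rightarrow> pt \<Rightarrow> pt \<Rightarrow> bool" where
  "opposite_extreme_corners \<omega> c d \<longleftrightarrow> c \<in> \<omega> \<and> d \<in> \<omega> \<and>
     ({c, d} = {(xmin \<omega>, ymin \<omega>), (xmax \<omega>, ymax \<omega>)} \<or>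
      {c, d} = {(xmin \<omega>, ymax \<omega>), (xmax \<omega>, ymin \<omega>)})"

definition has_diagonal :: "pt set \<Rightarrow> bool" where
  "has_diagonal \<omega> \<longleftrightarrow> (\<exists>c d. opposite_extreme_corners \<omega> c d \<and> closed_segment c d \<subseteq> \<omega>)"

end

theory Submission
  imports Defs
begin

text \<open>
  If a minimum skeleton is a single segment \<open>s\<close>, every horizontal and every vertical line
  through an interior point of \<open>\<omega>\<close> meets \<open>s\<close>: cut off outside the bounding box, such a line
  is a pair of points whose only shortest one-corner path is the line itself, and it crosses
  the interior. So the interior, and with it \<open>\<omega>\<close>, lies in the rectangle spanned by the ends of
  \<open>s\<close>; these ends are therefore opposite extreme corners and \<open>s\<close> is a diagonal.

  Conversely, map the bounding box affinely onto the unit square with the diagonal onto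
  \<open>(0, 0)\<close>--\<open>(1, 1)\<close>. Rectilinear convexity makes \<open>\<omega>\<close> contain, with each point above the
  diagonal, the staircase between that point and the diagonal; hence interior points above the
  diagonal stay interior when moved right or down, and symmetrically below it. Walking along an
  L-shaped path from an interior point in these directions, one can only reach an endpoint
  outside the interior by crossing the diagonal, so the diagonal alone is a skeleton.
\<close>

section \<open>Axis-parallel rectangles and L-shapes\<close>

definition rect_hull :: "pt \<Rightarrow> pt \<Rightarrow> pt set" where
  "rect_hull a b = cbox (min (fst a) (fst b), min (snd a) (snd b)) (max (fst a) (fst b), max (snd a) (snd b))"

lemma mem_rect_hull:
  "x \<in> rect_hull a b \<longleftrightarrow> min (fst a) (fst b) \<le> fst x \<and> fst x \<le> max (fst a) (fst b)
     \<and> min (snd a) (snd b) \<le> snd x \<and> snd x \<le> max (snd a) (snd b)"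
  by (cases x) (simp add: rect_hull_def)

lemma ends_in_rect_hull [simp]: "a \<in> rect_hull a b" "b \<in> rect_hull a b"
  by (simp_all add: mem_rect_hull)

lemma convex_rect_hull: "convex (rect_hull a b)"
  by (simp add: rect_hull_def)

lemma closed_segment_subset_rect_hull: "closed_segment a b \<subseteq> rect_hull a b"
  by (simp add: closed_segment_subset convex_rect_hull)

lemma rect_hull_eq_closed_segment:
  assumes "axis_parallel a b"
  shows "rect_hull a b = closed_segment a b"
proof
  show "rect_hull a b \<subseteq> closed_segment a b"
  proof
    fix x assume "x \<in> rect_hull a b"
    with assms have "dist a b = dist a x + dist x b"
      by (cases a, cases b, cases x)
         (auto simp: mem_rect_hull axis_parallel_def dist_Pair_Pair dist_real_def)
    then show "x \<in> closed_segment a b" by (simp add: between between_mem_segment[symmetric])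
  qed
qed (rule closed_segment_subset_rect_hull)

lemma rect_hull_trans: "x \<in> rect_hull b c \<Longrightarrow> b \<in> rect_hull a c \<Longrightarrow> x \<in> rect_hull a c"
  by (auto simp: mem_rect_hull)

lemma rect_hull_antisym: "a \<in> rect_hull b c \<Longrightarrow> b \<in> rect_hull a c \<Longrightarrow> a = b"
  by (auto simp: mem_rect_hull prod_eq_iff)

lemma l1_dist_add_eq_iff: "l1_dist a b + l1_dist b c = l1_dist a c \<longleftrightarrow> b \<in> rect_hull a c"
  unfolding l1_dist_def mem_rect_hull min_def max_def by (auto split: if_splits)

definition L_shape :: "pt \<Rightarrow> pt \<Rightarrow> pt \<Rightarrow> pt set" where
  "L_shape p r q = closed_segment p r \<union> closed_segment r q"

definition L_corners :: "pt \<Rightarrow> pt \<Rightarrow> pt set" where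
  "L_corners p q = {(fst q, snd p), (fst p, snd q)}"

definition L_corner :: "pt \<Rightarrow> pt \<Rightarrow> pt \<Rightarrow> pt" where
  "L_corner a b q = (if horizontal a b then (fst q, snd a) else (fst a, snd q))"

lemma L_shape_commute: "L_shape q r p = L_shape p r q"
  by (auto simp: L_shape_def closed_segment_commute)

lemma L_corners_commute: "L_corners q p = L_corners p q"
  by (auto simp: L_corners_def)

lemma L_shape_degenerate [simp]: "L_shape p q q = closed_segment p q" "L_shape p p q = closed_segment p q"
  by (auto simp: L_shape_def)

lemma L_corner_in_L_corners: "L_corner a b q \<in> L_corners a q"
  by (simp add: L_corner_def L_corners_def)

lemma L_corners_aligned:
  assumes "axis_parallel p q" "r \<in> L_corners p q"
  shows "L_shape p r q = closed_segment p q"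
proof -
  from assms have "r = p \<or> r = q" by (auto simp: axis_parallel_def L_corners_def prod_eq_iff)
  then show ?thesis by auto
qed

lemma L_shape_subset_rect_hull: "r \<in> L_corners p q \<Longrightarrow> L_shape p r q \<subseteq> rect_hull p q"
  using closed_segment_subset_rect_hull[of p r] closed_segment_subset_rect_hull[of r q]
  by (fastforce simp: L_shape_def L_corners_def mem_rect_hull)

lemma closed_segment_to_corner_subset_L_shape:
  assumes "z \<in> L_shape p r q"
  shows "closed_segment z r \<subseteq> L_shape p r q"
proof -
  have "closed_segment z r \<subseteq> closed_segment p r \<or> closed_segment z r \<subseteq> closed_segment r q"
    using assms by (auto simp: L_shape_def subset_closed_segment)
  then show ?thesis by (auto simp: L_shape_def)
qed

section \<open>Shortest rectilinear paths\<close>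

lemma path_len_singleton [simp]: "path_len [a] = 0"
  by (simp add: path_len_def)

lemma path_len_Cons_Cons [simp]: "path_len (a # b # ps) = l1_dist a b + path_len (b # ps)"
  by (simp add: path_len_def sum.lessThan_Suc_shift del: sum.lessThan_Suc)

lemma path_set_singleton [simp]: "path_set [a] = {a}"
  by (simp add: path_set_def)

lemma path_set_Cons_Cons [simp]: "path_set (a # b # ps) = closed_segment a b \<union> path_set (b # ps)"
  by (auto simp: path_set_def lessThan_Suc_eq_insert_0)

lemma rect_path_singleton [simp]: "rect_path [a]"
  by (simp add: rect_path_def)

lemma rect_path_Cons_Cons [simp]:
  "rect_path (a # b # ps) \<longleftrightarrow> a \<noteq> b \<and> axis_parallel a b \<and> rect_path (b # ps)"
  by (auto simp: rect_path_def less_Suc_eq_0_disj)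

lemma corner_points_Cons_Cons_Cons:
  "corner_points (a # b # c # ps) =
     (if horizontal a b = horizontal b c then {} else {b}) \<union> corner_points (b # c # ps)"
  (is "?L = ?B \<union> ?R")
proof (intro set_eqI iffI)
  fix x assume "x \<in> ?L"
  then obtain i where i: "x = (a # b # c # ps) ! i" "0 < i" "i < length (a # b # c # ps) - 1"
    "horizontal ((a # b # c # ps) ! (i - 1)) ((a # b # c # ps) ! i) \<noteq>
     horizontal ((a # b # c # ps) ! i) ((a # b # c # ps) ! Suc i)"
    unfolding corner_points_def by blast
  show "x \<in> ?B \<union> ?R"
  proof (cases "i = 1")
    case True
    with i show ?thesis by auto
  next
    case False
    then obtain j where "i = Suc j" "0 < j" using i(2) by (cases i) auto
    with i have "x \<in> ?R" unfolding corner_points_def by (auto intro!: exI[of _ j])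
    then show ?thesis ..
  qed
next
  fix x assume "x \<in> ?B \<union> ?R"
  then show "x \<in> ?L"
  proof
    assume "x \<in> ?B"
    then have "x = (a # b # c # ps) ! 1 \<and> 0 < (1::nat) \<and> 1 < length (a # b # c # ps) - 1 \<and>
      horizontal ((a # b # c # ps) ! (1 - 1)) ((a # b # c # ps) ! 1) \<noteq>
      horizontal ((a # b # c # ps) ! 1) ((a # b # c # ps) ! Suc 1)"
      by (simp split: if_splits)
    then show ?thesis unfolding corner_points_def by blast
  next
    assume "x \<in> ?R"
    then obtain j where "x = (b # c # ps) ! j" "0 < j" "j < length (b # c # ps) - 1"
      "horizontal ((b # c # ps) ! (j - 1)) ((b # c # ps) ! j) \<noteq>
       horizontal ((b # c # ps) ! j) ((b # c # ps) ! Suc j)"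
      unfolding corner_points_def by blast
    then have "x = (a # b # c # ps) ! Suc j \<and> 0 < Suc j \<and> Suc j < length (a # b # c # ps) - 1 \<and>
      horizontal ((a # b # c # ps) ! (Suc j - 1)) ((a # b # c # ps) ! Suc j) \<noteq>
      horizontal ((a # b # c # ps) ! Suc j) ((a # b # c # ps) ! Suc (Suc j))"
      by (cases j) auto
    then show ?thesis unfolding corner_points_def by blast
  qed
qed

lemma corner_points_subset: "corner_points ps \<subseteq> set (tl (butlast ps))"
proof
  fix x assume "x \<in> corner_points ps"
  then obtain i where "x = ps ! i" "0 < i" "i < length ps - 1"
    unfolding corner_points_def by blast
  then have "x = tl (butlast ps) ! (i - 1)" "i - 1 < length (tl (butlast ps))"
    by (auto simp: nth_tl nth_butlast)
  then show "x \<in> set (tl (butlast ps))" by simp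
qed

lemma card_corner_points_le_1: "length ps \<le> 3 \<Longrightarrow> card (corner_points ps) \<le> 1"
  using card_mono[OF finite_set corner_points_subset[of ps]] card_length[of "tl (butlast ps)"]
  by simp

definition l1_geodesic :: "pt list \<Rightarrow> bool" where
  "l1_geodesic ps \<longleftrightarrow> rect_path ps \<and> path_len ps = l1_dist (hd ps) (last ps)"

lemma l1_dist_le_path_len: "ps \<noteq> [] \<Longrightarrow> l1_dist (hd ps) (last ps) \<le> path_len ps"
proof (induction ps rule: induct_list012)
  case (3 a b ps)
  have "l1_dist a (last (b # ps)) \<le> l1_dist a b + l1_dist b (last (b # ps))"
    by (simp add: l1_dist_def)
  with 3 show ?case by simp
qed (simp_all add: l1_dist_def)

lemma l1_geodesic_singleton [simp]: "l1_geodesic [a]"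
  by (simp add: l1_geodesic_def l1_dist_def)

lemma l1_geodesic_Cons_Cons:
  "l1_geodesic (a # b # ps) \<longleftrightarrow>
     a \<noteq> b \<and> axis_parallel a b \<and> l1_geodesic (b # ps) \<and> b \<in> rect_hull a (last (b # ps))"
  (is "_ \<longleftrightarrow> _ \<and> _ \<and> _ \<and> b \<in> rect_hull a ?q")
proof -
  have "l1_dist a ?q \<le> l1_dist a b + l1_dist b ?q" "l1_dist b ?q \<le> path_len (b # ps)"
    using l1_dist_le_path_len[of "b # ps"] by (auto simp: l1_dist_def)
  then show ?thesis
    unfolding l1_geodesic_def l1_dist_add_eq_iff[symmetric] by auto
qed

lemma l1_geodesic_set_subset: "l1_geodesic ps \<Longrightarrow> set ps \<subseteq> rect_hull (hd ps) (last ps)"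
proof (induction ps rule: induct_list012)
  case (3 a b ps)
  then have "set (b # ps) \<subseteq> rect_hull b (last (b # ps))" "b \<in> rect_hull a (last (b # ps))"
    by (simp_all add: l1_geodesic_Cons_Cons)
  moreover have "a \<in> rect_hull a (last (b # ps))" by simp
  ultimately have "set (a # b # ps) \<subseteq> rect_hull a (last (b # ps))"
    by (simp only: list.set(2)) (blast intro: rect_hull_trans)
  then show ?case by simp
qed simp_all

lemma l1_geodesic_hd_notin_tl: "l1_geodesic (a # b # ps) \<Longrightarrow> a \<notin> set (b # ps)"
  using l1_geodesic_set_subset[of "b # ps"] rect_hull_antisym[of a b "last (b # ps)"]
  by (auto simp: l1_geodesic_Cons_Cons)

lemma finite_corner_points: "finite (corner_points ps)"
  using corner_points_subset finite_subset by blast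

lemma L_corner_straight:
  "horizontal a b = horizontal b c \<Longrightarrow> axis_parallel a b \<Longrightarrow> L_corner a b q = L_corner b c q"
  by (auto simp: L_corner_def horizontal_def axis_parallel_def)

lemma L_corner_turn:
  "horizontal a b \<noteq> horizontal b c \<Longrightarrow> axis_parallel a b \<Longrightarrow> L_corner b c q = q \<Longrightarrow> L_corner a b q = b"
  by (auto simp: L_corner_def horizontal_def axis_parallel_def prod_eq_iff split: if_splits)

lemma in_closed_segment_L_corner:
  assumes "axis_parallel a b" "b \<in> rect_hull a q"
  shows "b \<in> closed_segment a (L_corner a b q)"
proof -
  have "axis_parallel a (L_corner a b q)" by (simp add: L_corner_def axis_parallel_def)
  moreover from assms have "b \<in> rect_hull a (L_corner a b q)"
    by (auto simp: L_corner_def mem_rect_hull horizontal_def axis_parallel_def)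
  ultimately show ?thesis by (simp add: rect_hull_eq_closed_segment)
qed

lemma l1_geodesic_no_corner:
  "l1_geodesic (a # b # ps) \<Longrightarrow> corner_points (a # b # ps) = {} \<Longrightarrow>
     L_corner a b (last (b # ps)) = last (b # ps)"
proof (induction ps arbitrary: a b)
  case Nil
  then show ?case
    by (auto simp: l1_geodesic_Cons_Cons L_corner_def horizontal_def axis_parallel_def prod_eq_iff)
next
  case (Cons c ps)
  have geo: "axis_parallel a b" "l1_geodesic (b # c # ps)"
    using Cons.prems(1) by (simp_all add: l1_geodesic_Cons_Cons)
  have "horizontal a b = horizontal b c" "corner_points (b # c # ps) = {}"
    using Cons.prems(2) by (auto simp: corner_points_Cons_Cons_Cons split: if_splits)
  with Cons.IH[OF geo(2)] show ?case by (simp add: L_corner_straight[OF _ geo(1)])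
qed

lemma l1_geodesic_corner_unique:
  assumes geo: "l1_geodesic (a # b # c # ps)" and "card (corner_points (a # b # c # ps)) \<le> 1"
    and turn: "horizontal a b \<noteq> horizontal b c"
  shows "corner_points (b # c # ps) = {}"
proof -
  have "set (tl (butlast (b # c # ps))) \<subseteq> set (c # ps)"
    by (auto dest: in_set_butlastD)
  moreover have "l1_geodesic (b # c # ps)" using geo by (simp add: l1_geodesic_Cons_Cons)
  then have "b \<notin> set (c # ps)" by (rule l1_geodesic_hd_notin_tl)
  ultimately have "b \<notin> corner_points (b # c # ps)" using corner_points_subset by blast
  moreover have "corner_points (a # b # c # ps) = insert b (corner_points (b # c # ps))"
    using turn by (simp add: corner_points_Cons_Cons_Cons)
  then have "corner_points (b # c # ps) \<subseteq> {b}"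
    using assms(2) card_le_Suc0_iff_eq[OF finite_corner_points, of "a # b # c # ps"] by auto
  ultimately show ?thesis by blast
qed

lemma l1_geodesic_path_set:
  "l1_geodesic (a # b # ps) \<Longrightarrow> card (corner_points (a # b # ps)) \<le> 1 \<Longrightarrow>
     path_set (a # b # ps) = L_shape a (L_corner a b (last (b # ps))) (last (b # ps))"
proof (induction ps arbitrary: a b)
  case Nil
  then have "L_corner a b b = b"
    by (auto simp: l1_geodesic_Cons_Cons L_corner_def horizontal_def axis_parallel_def prod_eq_iff)
  then show ?case by (simp add: insert_absorb)
next
  case (Cons c ps)
  let ?q = "last (c # ps)"
  have geo: "axis_parallel a b" "l1_geodesic (b # c # ps)" "b \<in> rect_hull a ?q"
    using Cons.prems(1) by (simp_all add: l1_geodesic_Cons_Cons)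
  have corners: "corner_points (a # b # c # ps) =
      (if horizontal a b = horizontal b c then {} else {b}) \<union> corner_points (b # c # ps)"
    by (rule corner_points_Cons_Cons_Cons)
  show ?case
  proof (cases "horizontal a b = horizontal b c")
    case True
    define r where "r = L_corner a b ?q"
    have "r = L_corner b c ?q" using True geo(1) by (simp add: r_def L_corner_straight)
    with Cons.IH[OF geo(2)] Cons.prems(2) True corners
    have "path_set (b # c # ps) = L_shape b r ?q" by simp
    moreover have "closed_segment a b \<union> closed_segment b r = closed_segment a r"
      using in_closed_segment_L_corner[OF geo(1,3)] by (simp add: r_def Un_closed_segment)
    ultimately show ?thesis by (auto simp: r_def L_shape_def)
  next
    case False
    with Cons.prems have no_corner: "corner_points (b # c # ps) = {}"
      by (rule l1_geodesic_corner_unique)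
    then have "L_corner b c ?q = ?q" using l1_geodesic_no_corner[OF geo(2)] by simp
    moreover have "path_set (b # c # ps) = L_shape b (L_corner b c ?q) ?q"
      using Cons.IH[OF geo(2)] no_corner by simp
    ultimately have "path_set (b # c # ps) = closed_segment b ?q" by simp
    moreover have "L_corner a b ?q = b"
      using L_corner_turn[OF False geo(1) \<open>L_corner b c ?q = ?q\<close>] .
    ultimately show ?thesis by (simp add: L_shape_def)
  qed
qed

lemma l1_geodesic_shortest: "l1_geodesic ps \<Longrightarrow> shortest_rect_path (hd ps) (last ps) ps"
  unfolding shortest_rect_path_def rect_path_between_def l1_geodesic_def
  by (metis l1_dist_le_path_len rect_path_def)

lemma L_path_exists:
  assumes "r \<in> L_corners p q"
  shows "\<exists>ps. l1_geodesic ps \<and> hd ps = p \<and> last ps = q \<and> length ps \<le> 3 \<and>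
    path_set ps = L_shape p r q"
proof -
  have r: "axis_parallel p r" "axis_parallel r q" "r \<in> rect_hull p q"
    using assms by (auto simp: L_corners_def axis_parallel_def mem_rect_hull)
  consider "p = q" | "p \<noteq> q" "r = p \<or> r = q" | "r \<noteq> p" "r \<noteq> q"
    by blast
  then show ?thesis
  proof cases
    case 1
    with assms have "r = p" by (simp add: L_corners_def)
    with 1 show ?thesis by (intro exI[of _ "[p]"]) simp
  next
    case 2
    then show ?thesis using r by (intro exI[of _ "[p, q]"]) (auto simp: l1_geodesic_Cons_Cons insert_absorb)
  next
    case 3
    then show ?thesis using r
      by (intro exI[of _ "[p, r, q]"]) (auto simp: l1_geodesic_Cons_Cons L_shape_def)
  qed
qed

lemma shortest_rect_path_l1_geodesic:
  assumes "shortest_rect_path p q ps"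
  shows "l1_geodesic ps \<and> hd ps = p \<and> last ps = q"
proof -
  obtain ps' where ps': "l1_geodesic ps'" "hd ps' = p" "last ps' = q"
    using L_path_exists[of "(fst q, snd p)" p q] by (auto simp: L_corners_def)
  then have "path_len ps \<le> l1_dist p q"
    using assms l1_geodesic_shortest[OF ps'(1)]
    by (auto simp: shortest_rect_path_def l1_geodesic_def)
  moreover have "l1_dist p q \<le> path_len ps"
    using assms l1_dist_le_path_len[of ps]
    by (auto simp: shortest_rect_path_def rect_path_between_def rect_path_def)
  ultimately show ?thesis
    using assms by (auto simp: shortest_rect_path_def rect_path_between_def l1_geodesic_def)
qed

lemma short_L_path_exists:
  "r \<in> L_corners p q \<Longrightarrow> \<exists>ps. short_L_path p q ps \<and> path_set ps = L_shape p r q"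
  using L_path_exists l1_geodesic_shortest card_corner_points_le_1
  unfolding short_L_path_def by metis

lemma short_L_path_L_shape:
  assumes "short_L_path p q ps"
  shows "\<exists>r\<in>L_corners p q. path_set ps = L_shape p r q"
proof -
  have geo: "l1_geodesic ps" "hd ps = p" "last ps = q" and card: "card (corner_points ps) \<le> 1"
    using assms shortest_rect_path_l1_geodesic[of p q ps] by (auto simp: short_L_path_def)
  consider "ps = []" | a where "ps = [a]" | a b ps' where "ps = a # b # ps'"
    by (metis list.exhaust)
  then show ?thesis
  proof cases
    case 1
    then show ?thesis using geo by (simp add: l1_geodesic_def rect_path_def)
  next
    case (2 a)
    then show ?thesis using geo by (simp add: L_corners_def)
  next
    case (3 a b ps')
    with geo card have "path_set ps = L_shape p (L_corner p b q) q"
      using l1_geodesic_path_set[of a b ps'] by simp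
    then show ?thesis using L_corner_in_L_corners by blast
  qed
qed

section \<open>Orthogonal convexity\<close>

definition orth_convex :: "pt set \<Rightarrow> bool" where
  "orth_convex W \<longleftrightarrow> (\<forall>u\<in>W. \<forall>v\<in>W. axis_parallel u v \<longrightarrow> closed_segment u v \<subseteq> W)"

lemma orth_convex_rect_hull:
  "orth_convex W \<Longrightarrow> u \<in> W \<Longrightarrow> v \<in> W \<Longrightarrow> axis_parallel u v \<Longrightarrow> rect_hull u v \<subseteq> W"
  by (simp add: orth_convex_def rect_hull_eq_closed_segment)

lemma l1_geodesic_aligned_no_corner:
  assumes geo: "l1_geodesic ps" and aligned: "axis_parallel (hd ps) (last ps)"
  shows "corner_points ps = {}"
proof -
  let ?p = "hd ps" and ?q = "last ps"
  have on_line: "(fst ?p = fst ?q \<longrightarrow> fst x = fst ?p) \<and> (snd ?p = snd ?q \<longrightarrow> snd x = snd ?p)"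
    if "x \<in> set ps" for x
    using l1_geodesic_set_subset[OF geo] that by (auto simp: mem_rect_hull)
  have edge: "horizontal (ps ! i) (ps ! Suc i) \<longleftrightarrow> snd ?p = snd ?q" if "Suc i < length ps" for i
  proof -
    have "ps ! i \<in> set ps" "ps ! Suc i \<in> set ps" "ps ! i \<noteq> ps ! Suc i"
      using that geo by (auto simp: l1_geodesic_def rect_path_def)
    then show ?thesis
      using on_line[of "ps ! i"] on_line[of "ps ! Suc i"] aligned
      by (auto simp: horizontal_def axis_parallel_def prod_eq_iff)
  qed
  show ?thesis
  proof (rule ccontr)
    assume "corner_points ps \<noteq> {}"
    then obtain i where i: "0 < i" "i < length ps - 1"
      and turn: "horizontal (ps ! (i - 1)) (ps ! i) \<noteq> horizontal (ps ! i) (ps ! Suc i)"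
      unfolding corner_points_def by blast
    have "horizontal (ps ! (i - 1)) (ps ! i) \<longleftrightarrow> snd ?p = snd ?q"
      using edge[of "i - 1"] i by simp
    moreover have "horizontal (ps ! i) (ps ! Suc i) \<longleftrightarrow> snd ?p = snd ?q"
      using edge[of i] i by simp
    ultimately show False using turn by simp
  qed
qed

lemma rect_convex_imp_orth_convex:
  assumes "rect_convex W"
  shows "orth_convex W"
  unfolding orth_convex_def
proof (intro ballI impI)
  fix u v assume uv: "u \<in> W" "v \<in> W" "axis_parallel u v"
  obtain ps where ps: "shortest_rect_path u v ps" "path_set ps \<subseteq> W"
    using assms uv unfolding rect_convex_def by blast
  then have "short_L_path u v ps"
    using shortest_rect_path_l1_geodesic[OF ps(1)] l1_geodesic_aligned_no_corner uv(3)
    by (simp add: short_L_path_def)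
  then obtain r where "r \<in> L_corners u v" "path_set ps = L_shape u r v"
    using short_L_path_L_shape by blast
  then show "closed_segment u v \<subseteq> W" using ps(2) L_corners_aligned[OF uv(3)] by simp
qed

lemma skeleton_iff_L_shapes:
  "skeleton \<omega> S \<longleftrightarrow> finite S \<and> (\<forall>s\<in>S. is_segment s) \<and> \<Union>S \<subseteq> \<omega> \<and>
     (\<forall>p q. p \<notin> interior \<omega> \<and> q \<notin> interior \<omega> \<and>
        (\<forall>r\<in>L_corners p q. L_shape p r q \<inter> interior \<omega> \<noteq> {}) \<longrightarrow>
        (\<forall>r\<in>L_corners p q. \<exists>s\<in>S. L_shape p r q \<inter> s \<noteq> {}))"
proof -
  have L_paths: "(\<forall>ps. short_L_path p q ps \<longrightarrow> P (path_set ps)) \<longleftrightarrow>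
      (\<forall>r\<in>L_corners p q. P (L_shape p r q))" for p q and P :: "pt set \<Rightarrow> bool"
    using short_L_path_L_shape short_L_path_exists by metis
  show ?thesis
    unfolding skeleton_def L_paths[where P = "\<lambda>X. X \<inter> interior \<omega> \<noteq> {}"]
      L_paths[where P = "\<lambda>X. \<exists>s\<in>S. X \<inter> s \<noteq> {}"] ..
qed

section \<open>L-shapes crossing the diagonal of a rectangle\<close>

abbreviation unit_diagonal :: "pt set" where
  "unit_diagonal \<equiv> closed_segment (0, 0) (1, 1)"

lemma mem_unit_diagonal: "v \<in> unit_diagonal \<longleftrightarrow> fst v = snd v \<and> 0 \<le> fst v \<and> fst v \<le> 1"
  by (cases v) (auto simp: closed_segment_image_interval image_iff)

definition southeast :: "pt \<Rightarrow> pt \<Rightarrow> bool" where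
  "southeast u v \<longleftrightarrow> fst u \<le> fst v \<and> snd v \<le> snd u"

lemma southeast_closed_segment:
  "southeast a b \<Longrightarrow> z \<in> closed_segment a b \<Longrightarrow> southeast a z \<and> southeast z b"
  using closed_segment_subset_rect_hull[of a b] by (auto simp: southeast_def mem_rect_hull)

lemma linear_swap: "linear (prod.swap :: pt \<Rightarrow> pt)"
  by (rule linearI) auto

lemma interior_swap: "interior (prod.swap ` S) = prod.swap ` interior (S :: pt set)"
  by (rule interior_bijective_linear_image[OF linear_swap bij_swap])

lemma closed_segment_swap:
  "prod.swap ` closed_segment a b = closed_segment (prod.swap a) (prod.swap b :: pt)"
  by (rule closed_segment_linear_image[OF linear_swap, symmetric])

lemma swap_mem_swap_image [simp]: "prod.swap x \<in> prod.swap ` A \<longleftrightarrow> x \<in> A"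
  by (simp add: inj_image_mem_iff)

lemma swap_image_Int_empty [simp]: "prod.swap ` A \<inter> prod.swap ` B = {} \<longleftrightarrow> A \<inter> B = {}"
  by (simp add: image_Int[symmetric])

lemma swap_unit_diagonal: "prod.swap ` unit_diagonal = unit_diagonal"
  using closed_segment_swap[of "(0, 0)" "(1, 1)"] by simp

lemma swap_L_shape: "prod.swap ` L_shape p r q = L_shape (prod.swap p) (prod.swap r) (prod.swap q)"
  by (simp add: L_shape_def image_Un closed_segment_swap)

lemma swap_L_corners: "prod.swap ` L_corners p q = L_corners (prod.swap p) (prod.swap q)"
  by (auto simp: L_corners_def)

lemma descending_L_shape_split:
  assumes se: "southeast p r" "southeast r q" and z: "z \<in> L_shape p r q"
  shows "\<exists>r'. southeast z r' \<and> southeast r' q \<and> L_shape z r' q \<subseteq> L_shape p r q"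
    and "\<exists>r'. southeast p r' \<and> southeast r' z \<and> L_shape p r' z \<subseteq> L_shape p r q"
proof -
  have refl: "southeast u u" for u by (simp add: southeast_def)
  from z consider (pr) "z \<in> closed_segment p r" | (rq) "z \<in> closed_segment r q"
    by (auto simp: L_shape_def)
  then have "(\<exists>r'. southeast z r' \<and> southeast r' q \<and> L_shape z r' q \<subseteq> L_shape p r q) \<and>
      (\<exists>r'. southeast p r' \<and> southeast r' z \<and> L_shape p r' z \<subseteq> L_shape p r q)"
  proof cases
    case pr
    then have "closed_segment z r \<subseteq> closed_segment p r" "closed_segment p z \<subseteq> closed_segment p r"
      by (simp_all add: subset_closed_segment)
    then show ?thesis using southeast_closed_segment[OF se(1) pr] se(2) refl
      by (intro conjI exI[of _ r] exI[of _ p]) (auto simp: L_shape_def)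
  next
    case rq
    then have "closed_segment z q \<subseteq> closed_segment r q" "closed_segment r z \<subseteq> closed_segment r q"
      by (simp_all add: subset_closed_segment)
    then show ?thesis using southeast_closed_segment[OF se(2) rq] se(1) refl
      by (intro conjI exI[of _ q] exI[of _ r]) (auto simp: L_shape_def)
  qed
  then show "\<exists>r'. southeast z r' \<and> southeast r' q \<and> L_shape z r' q \<subseteq> L_shape p r q"
    and "\<exists>r'. southeast p r' \<and> southeast r' z \<and> L_shape p r' z \<subseteq> L_shape p r q"
    by blast+
qed

lemma ascending_L_shape_northwest_end:
  assumes le: "fst p \<le> fst q" "snd p \<le> snd q" and z: "z \<in> L_shape p (fst q, snd p) q"
  shows "\<exists>e\<in>{p, q}. southeast e z \<and> closed_segment z e \<subseteq> L_shape p (fst q, snd p) q"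
proof -
  let ?se = "(fst q, snd p)"
  from z consider "z \<in> closed_segment p ?se" | "z \<in> closed_segment ?se q"
    by (auto simp: L_shape_def)
  then show ?thesis
  proof cases
    case 1
    then have "closed_segment z p \<subseteq> closed_segment p ?se" by (simp add: subset_closed_segment)
    moreover have "southeast p z"
      using 1 closed_segment_subset_rect_hull[of p ?se] le by (auto simp: mem_rect_hull southeast_def)
    ultimately show ?thesis by (auto simp: L_shape_def)
  next
    case 2
    then have "closed_segment z q \<subseteq> closed_segment ?se q" by (simp add: subset_closed_segment)
    moreover have "southeast q z"
      using 2 closed_segment_subset_rect_hull[of ?se q] le by (auto simp: mem_rect_hull southeast_def)
    ultimately show ?thesis by (auto simp: L_shape_def)
  qed
qed

locale unit_square_diagonal =
  fixes W :: "pt set"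
  assumes orth_convex: "orth_convex W"
    and diagonal_subset: "unit_diagonal \<subseteq> W"
    and subset_unit_square: "W \<subseteq> cbox (0, 0) (1, 1)"
begin

lemma swap: "unit_square_diagonal (prod.swap ` W)"
proof
  show "orth_convex (prod.swap ` W)"
    unfolding orth_convex_def
  proof (intro ballI impI)
    fix u v assume "u \<in> prod.swap ` W" "v \<in> prod.swap ` W" "axis_parallel u v"
    then have "prod.swap u \<in> W" "prod.swap v \<in> W" "axis_parallel (prod.swap u) (prod.swap v)"
      by (auto simp: axis_parallel_def)
    then have "closed_segment (prod.swap u) (prod.swap v) \<subseteq> W"
      using orth_convex unfolding orth_convex_def by blast
    then have "prod.swap ` closed_segment (prod.swap u) (prod.swap v) \<subseteq> prod.swap ` W"
      by (rule image_mono)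
    then show "closed_segment u v \<subseteq> prod.swap ` W"
      by (simp add: closed_segment_swap)
  qed
  show "unit_diagonal \<subseteq> prod.swap ` W"
  proof
    fix v :: pt assume "v \<in> unit_diagonal"
    then have "prod.swap v \<in> W" using diagonal_subset by (auto simp: mem_unit_diagonal)
    then show "v \<in> prod.swap ` W" by (metis swap_mem_swap_image swap_swap)
  qed
  show "prod.swap ` W \<subseteq> cbox (0, 0) (1, 1)"
    using subset_unit_square swap_cbox_Pair[of 0 0 1 1] by auto
qed

lemma interior_in_unit_square:
  assumes "u \<in> interior W"
  shows "0 < fst u \<and> fst u < 1 \<and> 0 < snd u \<and> snd u < 1"
proof -
  have "u \<in> interior (cbox (0, 0) (1, 1))" using assms interior_mono[OF subset_unit_square] by blast
  then show ?thesis by (cases u) (simp add: mem_box Basis_prod_def)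
qed

lemma staircase:
  assumes u: "u \<in> W" and v: "0 \<le> fst v" "fst v \<le> snd v" "southeast u v"
  shows "v \<in> W"
proof -
  have "u \<in> cbox (0, 0) (1, 1)" using u subset_unit_square by blast
  then have u_box: "0 \<le> snd u" "snd u \<le> 1" by (cases u, simp)+
  have "(snd u, snd u) \<in> W" "(fst v, fst v) \<in> W"
    using diagonal_subset u_box v by (auto simp: mem_unit_diagonal southeast_def)
  then have "rect_hull u (snd u, snd u) \<subseteq> W"
    using orth_convex_rect_hull[OF orth_convex u] by (simp add: axis_parallel_def)
  then have "(fst v, snd u) \<in> W" using v by (auto simp: mem_rect_hull southeast_def)
  then have "rect_hull (fst v, fst v) (fst v, snd u) \<subseteq> W"
    using orth_convex_rect_hull[OF orth_convex] \<open>(fst v, fst v) \<in> W\<close> by (simp add: axis_parallel_def)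
  then show "v \<in> W" using v by (auto simp: mem_rect_hull southeast_def)
qed

lemma staircase_interior:
  assumes u: "u \<in> interior W" and v: "0 < fst v" "fst v < snd v" "southeast u v"
  shows "v \<in> interior W"
proof -
  let ?P = "{v :: pt. 0 < fst v \<and> fst v < snd v}"
  obtain e where e: "e > 0" "ball u e \<subseteq> W" using u mem_interior by blast
  have "open ?P" by (intro open_Collect_conj open_Collect_less continuous_intros)
  then obtain d where d: "d > 0" "ball v d \<subseteq> ?P" using v open_contains_ball by blast
  have "ball v (min e d) \<subseteq> W"
  proof
    fix v' assume v': "v' \<in> ball v (min e d)"
    have "u + (v' - v) \<in> ball u e" using v' by (simp add: dist_norm)
    then have "u + (v' - v) \<in> W" using e by blast
    moreover have "v' \<in> ?P" using v' d by auto
    moreover have "southeast (u + (v' - v)) v'" using v(3) by (auto simp: southeast_def)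
    ultimately show "v' \<in> W" using staircase by auto
  qed
  then show ?thesis using e d by (meson centre_in_ball min_less_iff_conj mem_interior)
qed

lemma above_to_southeast:
  assumes z: "z \<in> interior W" "fst z < snd z" and e: "southeast z e"
  shows "(e \<in> interior W \<and> fst e < snd e) \<or> closed_segment z e \<inter> unit_diagonal \<noteq> {}"
proof (cases "fst e < snd e")
  case True
  then show ?thesis using staircase_interior[OF z(1) _ True e] interior_in_unit_square[OF z(1)] e
    by (auto simp: southeast_def)
next
  case False
  have "inner (1, -1) z \<le> (0 :: real)" "0 \<le> inner (1, -1) e"
    using z(2) False by (cases z, cases e, simp)+
  then obtain w where w: "w \<in> closed_segment z e" "inner (1, -1) w = (0 :: real)"
    using connected_ivt_hyperplane[of "closed_segment z e" z e "(1, -1)" 0] by auto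
  then have "fst w = snd w" by (cases w) simp
  from w have "southeast z w" using southeast_closed_segment[OF e] by blast
  with \<open>fst w = snd w\<close> have "w \<in> unit_diagonal"
    using interior_in_unit_square[OF z(1)] by (auto simp: mem_unit_diagonal southeast_def)
  then show ?thesis using w(1) by blast
qed

lemma below_to_northwest:
  assumes z: "z \<in> interior W" "snd z < fst z" and e: "southeast e z"
  shows "(e \<in> interior W \<and> snd e < fst e) \<or> closed_segment z e \<inter> unit_diagonal \<noteq> {}"
proof -
  interpret swapped: unit_square_diagonal "prod.swap ` W" by (rule swap)
  have "southeast (prod.swap z) (prod.swap e)" using e by (simp add: southeast_def)
  then have "(prod.swap e \<in> interior (prod.swap ` W) \<and> snd e < fst e) \<or>
      closed_segment (prod.swap z) (prod.swap e) \<inter> prod.swap ` unit_diagonal \<noteq> {}"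
    using swapped.above_to_southeast[of "prod.swap z" "prod.swap e"] z
    by (simp add: interior_swap closed_segment_swap)
  then show ?thesis by (simp add: interior_swap closed_segment_swap[symmetric])
qed

lemma interior_not_on_diagonal:
  "z \<in> interior W \<Longrightarrow> z \<notin> unit_diagonal \<Longrightarrow> fst z < snd z \<or> snd z < fst z"
  using interior_in_unit_square[of z] by (auto simp: mem_unit_diagonal)

lemma above_chain:
  assumes z: "z \<in> interior W" "fst z < snd z" and "southeast z r" "southeast r q"
    and avoid: "L_shape z r q \<inter> unit_diagonal = {}"
  shows "q \<in> interior W"
proof -
  have "r \<in> interior W" "fst r < snd r"
    using above_to_southeast[OF z \<open>southeast z r\<close>] avoid by (auto simp: L_shape_def)
  then show ?thesis
    using above_to_southeast[of r q] \<open>southeast r q\<close> avoid by (auto simp: L_shape_def)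
qed

lemma below_chain:
  assumes z: "z \<in> interior W" "snd z < fst z" and "southeast p r" "southeast r z"
    and avoid: "L_shape p r z \<inter> unit_diagonal = {}"
  shows "p \<in> interior W"
proof -
  have "r \<in> interior W" "snd r < fst r"
    using below_to_northwest[OF z \<open>southeast r z\<close>] avoid
    by (auto simp: L_shape_def closed_segment_commute)
  then show ?thesis
    using below_to_northwest[of r p] \<open>southeast p r\<close> avoid
    by (auto simp: L_shape_def closed_segment_commute)
qed

text \<open>From an interior point of a descending L-shape one can walk along it, staying in the
  interior, to the endpoint on the same side of the diagonal.\<close>

lemma descending_L_shape_meets_diagonal:
  assumes se: "southeast p r" "southeast r q" and pq: "p \<notin> interior W" "q \<notin> interior W"
    and "L_shape p r q \<inter> interior W \<noteq> {}"
  shows "L_shape p r q \<inter> unit_diagonal \<noteq> {}"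
proof
  assume avoid: "L_shape p r q \<inter> unit_diagonal = {}"
  obtain z where z: "z \<in> L_shape p r q" "z \<in> interior W" using assms(5) by blast
  consider "fst z < snd z" | "snd z < fst z"
    using interior_not_on_diagonal[OF z(2)] z(1) avoid by blast
  then show False
  proof cases
    case 1
    obtain r' where "southeast z r'" "southeast r' q" "L_shape z r' q \<subseteq> L_shape p r q"
      using descending_L_shape_split(1)[OF se z(1)] by blast
    then have "q \<in> interior W" using above_chain[OF z(2) 1] avoid by blast
    with pq(2) show False ..
  next
    case 2
    obtain r' where "southeast p r'" "southeast r' z" "L_shape p r' z \<subseteq> L_shape p r q"
      using descending_L_shape_split(2)[OF se z(1)] by blast
    then have "p \<in> interior W" using below_chain[OF z(2) 2] avoid by blast
    with pq(1) show False ..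
  qed
qed

lemma ascending_L_shape_above_diagonal:
  assumes le: "fst p \<le> fst q" "snd p \<le> snd q"
    and above: "\<And>v. v \<in> rect_hull p q \<Longrightarrow> fst v < snd v"
    and z: "z \<in> L_shape p (fst p, snd q) q" "z \<in> interior W"
  shows "p \<in> interior W \<or> q \<in> interior W"
proof -
  have z_rect: "z \<in> rect_hull p q"
    using z(1) L_shape_subset_rect_hull[of "(fst p, snd q)" p q] by (auto simp: L_corners_def)
  have "southeast z p \<or> southeast z q"
    using z(1) closed_segment_subset_rect_hull[of p "(fst p, snd q)"]
      closed_segment_subset_rect_hull[of "(fst p, snd q)" q] le
    by (auto simp: L_shape_def mem_rect_hull southeast_def)
  then obtain e where e: "e \<in> {p, q}" "southeast z e" by blast
  then have "e \<in> rect_hull p q" by auto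
  then have "closed_segment z e \<subseteq> rect_hull p q"
    using closed_segment_subset[OF z_rect _ convex_rect_hull] by blast
  then have "closed_segment z e \<inter> unit_diagonal = {}"
    using above by (fastforce simp: mem_unit_diagonal)
  then show ?thesis using above_to_southeast[OF z(2) above[OF z_rect] e(2)] e(1) by blast
qed

text \<open>If the L-shape through the lower right corner \<open>se\<close> avoided the diagonal, an interior point
  above the diagonal could be moved to \<open>se\<close>, so the whole rectangle would lie above the
  diagonal, and an interior point of the other L-shape could be moved to \<open>p\<close> or \<open>q\<close>.
  Interior points below the diagonal move directly to \<open>p\<close> or \<open>q\<close>.\<close>

lemma ascending_L_shape_se_meets_diagonal:
  assumes le: "fst p \<le> fst q" "snd p \<le> snd q" and pq: "p \<notin> interior W" "q \<notin> interior W"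
    and hits: "\<forall>r\<in>L_corners p q. L_shape p r q \<inter> interior W \<noteq> {}"
  shows "L_shape p (fst q, snd p) q \<inter> unit_diagonal \<noteq> {}"
proof
  define se where "se = (fst q, snd p)"
  define nw where "nw = (fst p, snd q)"
  have corners: "se \<in> L_corners p q" "nw \<in> L_corners p q" by (simp_all add: se_def nw_def L_corners_def)
  assume "L_shape p (fst q, snd p) q \<inter> unit_diagonal = {}"
  then have avoid: "L_shape p se q \<inter> unit_diagonal = {}" by (simp add: se_def)
  obtain z where z: "z \<in> L_shape p se q" "z \<in> interior W" using hits corners by blast
  consider "fst z < snd z" | "snd z < fst z"
    using interior_not_on_diagonal[OF z(2)] z(1) avoid by blast
  then show False
  proof cases
    case 1
    have "closed_segment z se \<subseteq> L_shape p se q"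
      using closed_segment_to_corner_subset_L_shape[OF z(1)] .
    moreover have "southeast z se"
      using L_shape_subset_rect_hull[OF corners(1)] z(1) le by (auto simp: southeast_def se_def mem_rect_hull)
    ultimately have "se \<in> interior W" "fst se < snd se"
      using above_to_southeast[OF z(2) 1] avoid by blast+
    then have above: "fst v < snd v" if "v \<in> rect_hull p q" for v
      using that le by (auto simp: se_def mem_rect_hull)
    obtain z' where z': "z' \<in> L_shape p nw q" "z' \<in> interior W" using hits corners by blast
    from ascending_L_shape_above_diagonal[OF le above z'[unfolded nw_def]] pq show False by blast
  next
    case 2
    have "\<exists>e\<in>{p, q}. southeast e z \<and> closed_segment z e \<subseteq> L_shape p se q"
      using ascending_L_shape_northwest_end[OF le z(1)[unfolded se_def]] by (simp only: se_def)
    then obtain e where "e \<in> {p, q}" "southeast e z" "closed_segment z e \<subseteq> L_shape p se q"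
      by blast
    then show False using below_to_northwest[OF z(2) 2] avoid pq by blast
  qed
qed

lemma ascending_L_shape_nw_meets_diagonal:
  assumes le: "fst p \<le> fst q" "snd p \<le> snd q" and pq: "p \<notin> interior W" "q \<notin> interior W"
    and hits: "\<forall>r\<in>L_corners p q. L_shape p r q \<inter> interior W \<noteq> {}"
  shows "L_shape p (fst p, snd q) q \<inter> unit_diagonal \<noteq> {}"
proof -
  interpret swapped: unit_square_diagonal "prod.swap ` W" by (rule swap)
  have "L_shape (prod.swap p) (prod.swap (fst p, snd q)) (prod.swap q) \<inter> unit_diagonal \<noteq> {}"
    using swapped.ascending_L_shape_se_meets_diagonal[of "prod.swap p" "prod.swap q"] le pq hits
    by (simp add: interior_swap swap_L_corners[symmetric] swap_L_shape[symmetric])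
  then have "prod.swap ` L_shape p (fst p, snd q) q \<inter> prod.swap ` unit_diagonal \<noteq> {}"
    by (simp add: swap_L_shape swap_unit_diagonal)
  then show ?thesis by simp
qed

lemma L_shape_meets_unit_diagonal_ordered:
  assumes le: "fst p \<le> fst q" and pq: "p \<notin> interior W" "q \<notin> interior W"
    and hits: "\<forall>r\<in>L_corners p q. L_shape p r q \<inter> interior W \<noteq> {}" and r: "r \<in> L_corners p q"
  shows "L_shape p r q \<inter> unit_diagonal \<noteq> {}"
proof (cases "snd p \<le> snd q")
  case True
  from r consider "r = (fst q, snd p)" | "r = (fst p, snd q)" by (auto simp: L_corners_def)
  then show ?thesis
    using ascending_L_shape_se_meets_diagonal[OF le True pq hits]
      ascending_L_shape_nw_meets_diagonal[OF le True pq hits]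
    by cases simp_all
next
  case False
  then have "southeast p r" "southeast r q" using le r by (auto simp: L_corners_def southeast_def)
  then show ?thesis using descending_L_shape_meets_diagonal pq hits r by blast
qed

theorem L_shape_meets_unit_diagonal:
  assumes "p \<notin> interior W" "q \<notin> interior W"
    and "\<forall>r\<in>L_corners p q. L_shape p r q \<inter> interior W \<noteq> {}" and "r \<in> L_corners p q"
  shows "L_shape p r q \<inter> unit_diagonal \<noteq> {}"
proof (cases "fst p \<le> fst q")
  case True
  then show ?thesis using L_shape_meets_unit_diagonal_ordered assms by blast
next
  case False
  then show ?thesis
    using L_shape_meets_unit_diagonal_ordered[of q p r] assms
    by (simp add: L_shape_commute L_corners_commute)
qed

end

definition axis_scaling :: "real \<Rightarrow> real \<Rightarrow> pt \<Rightarrow> pt" where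
  "axis_scaling \<alpha> \<beta> v = (\<alpha> * fst v, \<beta> * snd v)"

lemma linear_axis_scaling: "linear (axis_scaling \<alpha> \<beta>)"
  by (rule linearI) (auto simp: axis_scaling_def algebra_simps)

lemma inj_axis_scaling: "\<alpha> \<noteq> 0 \<Longrightarrow> \<beta> \<noteq> 0 \<Longrightarrow> inj (axis_scaling \<alpha> \<beta>)"
  by (auto simp: inj_def axis_scaling_def prod_eq_iff)

definition normalize :: "pt \<Rightarrow> pt \<Rightarrow> pt \<Rightarrow> pt" where
  "normalize c d v = ((fst v - fst c) / (fst d - fst c), (snd v - snd c) / (snd d - snd c))"

context
  fixes c d :: pt
  assumes nondegenerate: "fst c \<noteq> fst d" "snd c \<noteq> snd d"
begin

private abbreviation "scaling \<equiv> axis_scaling (1 / (fst d - fst c)) (1 / (snd d - snd c))"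

private lemma normalize_eq: "normalize c d = (+) (- scaling c) \<circ> scaling"
  by (simp add: fun_eq_iff normalize_def axis_scaling_def diff_divide_distrib)

lemma inj_normalize: "inj (normalize c d)"
  using nondegenerate by (auto simp: inj_def normalize_def prod_eq_iff)

lemma interior_normalize: "interior (normalize c d ` S) = normalize c d ` interior S"
proof -
  have "interior (normalize c d ` S) = (+) (- scaling c) ` interior (scaling ` S)"
    unfolding normalize_eq image_comp[symmetric] by (rule interior_translation)
  also have "\<dots> = (+) (- scaling c) ` scaling ` interior S"
    using nondegenerate
    by (simp add: interior_injective_linear_image[OF linear_axis_scaling inj_axis_scaling])
  also have "\<dots> = normalize c d ` interior S"
    by (simp only: normalize_eq image_comp)
  finally show ?thesis .
qed

lemma normalize_closed_segment:
  "normalize c d ` closed_segment u v = closed_segment (normalize c d u) (normalize c d v)"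
proof -
  have "normalize c d ` closed_segment u v = (+) (- scaling c) ` closed_segment (scaling u) (scaling v)"
    by (simp only: normalize_eq image_comp[symmetric] closed_segment_linear_image[OF linear_axis_scaling])
  also have "\<dots> = closed_segment (normalize c d u) (normalize c d v)"
    by (simp only: closed_segment_translation[symmetric] normalize_eq comp_apply)
  finally show ?thesis .
qed

lemma normalize_ends: "normalize c d c = (0, 0)" "normalize c d d = (1, 1)"
  using nondegenerate by (simp_all add: normalize_def)

lemma normalize_rect_hull: "normalize c d ` rect_hull c d \<subseteq> cbox (0, 0) (1, 1)"
  using nondegenerate
  by (auto simp: normalize_def mem_rect_hull cbox_Pair_iff divide_simps min_def max_def split: if_splits)

lemma normalize_axis_parallel: "axis_parallel (normalize c d u) (normalize c d v) \<longleftrightarrow> axis_parallel u v"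
  using nondegenerate by (auto simp: axis_parallel_def normalize_def divide_simps)

lemma normalize_L_corners: "normalize c d ` L_corners p q = L_corners (normalize c d p) (normalize c d q)"
  by (auto simp: L_corners_def normalize_def)

lemma normalize_L_shape:
  "normalize c d ` L_shape p r q = L_shape (normalize c d p) (normalize c d r) (normalize c d q)"
  by (simp add: L_shape_def image_Un normalize_closed_segment)

lemma orth_convex_normalize: "orth_convex W \<Longrightarrow> orth_convex (normalize c d ` W)"
  unfolding orth_convex_def
  by (auto simp: normalize_axis_parallel normalize_closed_segment[symmetric] intro: image_mono)

end

theorem L_shape_meets_diagonal:
  assumes W: "orth_convex W" "W \<subseteq> rect_hull c d" "closed_segment c d \<subseteq> W"
    and cd: "fst c \<noteq> fst d" "snd c \<noteq> snd d"
    and pq: "p \<notin> interior W" "q \<notin> interior W"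
    and hits: "\<forall>r\<in>L_corners p q. L_shape p r q \<inter> interior W \<noteq> {}" and r: "r \<in> L_corners p q"
  shows "L_shape p r q \<inter> closed_segment c d \<noteq> {}"
proof -
  let ?f = "normalize c d"
  have inj: "inj ?f" by (rule inj_normalize[OF cd])
  have D: "?f ` closed_segment c d = unit_diagonal"
    by (simp add: normalize_closed_segment[OF cd] normalize_ends[OF cd])
  interpret normalized: unit_square_diagonal "?f ` W"
  proof
    show "orth_convex (?f ` W)" by (rule orth_convex_normalize[OF cd W(1)])
    show "unit_diagonal \<subseteq> ?f ` W" using W(3) D by blast
    show "?f ` W \<subseteq> cbox (0, 0) (1, 1)" using W(2) normalize_rect_hull[OF cd] by blast
  qed
  have "L_shape (?f p) (?f r) (?f q) \<inter> unit_diagonal \<noteq> {}"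
  proof (rule normalized.L_shape_meets_unit_diagonal)
    show "?f p \<notin> interior (?f ` W)" "?f q \<notin> interior (?f ` W)"
      using pq inj by (simp_all add: interior_normalize[OF cd] inj_image_mem_iff)
    show "?f r \<in> L_corners (?f p) (?f q)"
      using r normalize_L_corners[OF cd] by blast
    show "\<forall>r'\<in>L_corners (?f p) (?f q). L_shape (?f p) r' (?f q) \<inter> interior (?f ` W) \<noteq> {}"
      using hits inj
      by (auto simp: normalize_L_corners[OF cd, symmetric] normalize_L_shape[OF cd, symmetric]
          interior_normalize[OF cd] image_Int[symmetric])
  qed
  then show ?thesis
    using inj by (simp add: normalize_L_shape[OF cd, symmetric] D[symmetric] image_Int[symmetric])
qed

section \<open>Simple polygons\<close>

lemma inside_simple_loop:
  fixes g :: "real \<Rightarrow> pt"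
  assumes "simple_path g" "pathfinish g = pathstart g"
  shows "inside (path_image g) \<noteq> {} \<and> path_image g \<subseteq> closure (inside (path_image g))"
proof -
  let ?B = "path_image g"
  have "?B homeomorphic sphere (0 :: complex) 1"
    by (rule homeomorphic_simple_path_image_circle[OF assms]) simp
  moreover have "sphere (0 :: complex) 1 homeomorphic sphere (0 :: pt) 1"
    by (rule homeomorphic_spheres_gen) auto
  ultimately have sphere: "?B homeomorphic sphere (0 :: pt) 1"
    by (rule homeomorphic_trans)
  have "\<not> connected (- ?B)" using Jordan_Brouwer_separation[OF sphere] by simp
  moreover have "bounded ?B" using assms(1) bounded_simple_path_image by blast
  ultimately obtain C where C: "C \<in> components (- ?B)" "bounded C"
    using cobounded_has_bounded_component[of "- ?B"] by auto
  have "C \<subseteq> inside ?B"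
  proof
    fix x assume "x \<in> C"
    then have "C = connected_component_set (- ?B) x" "x \<notin> ?B"
      using C(1) components_iff in_components_subset
      by (metis connected_component_eq mem_Collect_eq, blast)
    then show "x \<in> inside ?B" using C(2) by (simp add: inside_def)
  qed
  moreover have "C \<noteq> {}" using C(1) in_components_nonempty by blast
  moreover have "frontier C = ?B" using Jordan_Brouwer_frontier[OF sphere C(1)] by simp
  then have "?B \<subseteq> closure C" by (auto simp: frontier_def)
  ultimately show ?thesis using closure_mono by (metis subset_empty order_trans)
qed

fun polyline :: "pt list \<Rightarrow> real \<Rightarrow> pt" where
  "polyline (a # b # c # ps) = linepath a b +++ polyline (b # c # ps)"
| "polyline [a, b] = linepath a b"
| "polyline _ = linepath 0 0"

definition simple_chain :: "pt list \<Rightarrow> bool" where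
  "simple_chain xs \<longleftrightarrow> (\<forall>i < length xs - 1. xs ! i \<noteq> xs ! Suc i) \<and>
     (\<forall>i j. i < j \<and> j < length xs - 1 \<longrightarrow>
        closed_segment (xs ! i) (xs ! Suc i) \<inter> closed_segment (xs ! j) (xs ! Suc j)
          \<subseteq> (if j = Suc i then {xs ! j} else {}))"

lemma simple_chain_Cons_Cons:
  assumes "simple_chain (a # b # ps)"
  shows "a \<noteq> b \<and> simple_chain (b # ps) \<and>
    closed_segment a b \<inter> (\<Union>i < length ps. closed_segment ((b # ps) ! i) ((b # ps) ! Suc i)) \<subseteq> {b}"
proof -
  let ?xs = "a # b # ps"
  have distinct: "\<forall>i < length ?xs - 1. ?xs ! i \<noteq> ?xs ! Suc i"
    and meet: "\<And>i j. i < j \<Longrightarrow> j < length ?xs - 1 \<Longrightarrow>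
      closed_segment (?xs ! i) (?xs ! Suc i) \<inter> closed_segment (?xs ! j) (?xs ! Suc j)
        \<subseteq> (if j = Suc i then {?xs ! j} else {})"
    using assms by (auto simp: simple_chain_def)
  have "simple_chain (b # ps)"
    unfolding simple_chain_def
  proof (intro conjI allI impI)
    show "(b # ps) ! i \<noteq> (b # ps) ! Suc i" if "i < length (b # ps) - 1" for i
      using distinct that by (auto simp: less_diff_conv)
    show "closed_segment ((b # ps) ! i) ((b # ps) ! Suc i) \<inter> closed_segment ((b # ps) ! j) ((b # ps) ! Suc j)
        \<subseteq> (if j = Suc i then {(b # ps) ! j} else {})"
      if "i < j \<and> j < length (b # ps) - 1" for i j
    proof -
      from that have "closed_segment (?xs ! Suc i) (?xs ! Suc (Suc i)) \<inter>
          closed_segment (?xs ! Suc j) (?xs ! Suc (Suc j))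
          \<subseteq> (if Suc j = Suc (Suc i) then {?xs ! Suc j} else {})"
        by (intro meet) auto
      then show ?thesis by (simp only: nth_Cons_Suc nat.inject)
    qed
  qed
  moreover have "closed_segment a b \<inter> closed_segment ((b # ps) ! i) ((b # ps) ! Suc i) \<subseteq> {b}"
    if "i < length ps" for i
    using meet[of 0 "Suc i"] that by (auto split: if_splits)
  ultimately show ?thesis using distinct by fastforce
qed

lemma arc_polyline:
  assumes "simple_chain xs" "length xs \<ge> 2"
  shows "arc (polyline xs) \<and>
    path_image (polyline xs) = (\<Union>i < length xs - 1. closed_segment (xs ! i) (xs ! Suc i)) \<and>
    pathstart (polyline xs) = hd xs \<and> pathfinish (polyline xs) = last xs"
  using assms
proof (induction xs rule: polyline.induct)
  case (1 a b c ps)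
  let ?ys = "b # c # ps"
  have "a \<noteq> b" "simple_chain ?ys"
    and first: "closed_segment a b \<inter> (\<Union>i < length ?ys - 1. closed_segment (?ys ! i) (?ys ! Suc i)) \<subseteq> {b}"
    using simple_chain_Cons_Cons[OF "1.prems"(1)] by simp_all
  moreover have "(\<Union>i < length (a # ?ys) - 1. closed_segment ((a # ?ys) ! i) ((a # ?ys) ! Suc i))
      = closed_segment a b \<union> (\<Union>i < length ?ys - 1. closed_segment (?ys ! i) (?ys ! Suc i))"
    by (simp add: lessThan_Suc_eq_insert_0)
  ultimately show ?case
    using "1.IH" by (auto simp: arc_join arc_linepath path_image_join)
next
  case (2 a b)
  then show ?case by (force simp: arc_linepath simple_chain_def)
qed auto

lemma pedge_conv_closed_segment: "Suc i < length vs \<Longrightarrow> pedge vs i = closed_segment (vs!i) (vs!Suc i)"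
  by (simp add: pedge_def pvert_def)

lemma pedge_last: "length vs \<ge> 1 \<Longrightarrow> pedge vs (length vs - 1) = closed_segment (last vs) (hd vs)"
  by (cases vs) (auto simp: pedge_def pvert_def last_conv_nth)

lemma simple_polygon_edges_meet:
  assumes "simple_polygon vs" "i < j" "j < length vs"
  shows "pedge vs i \<inter> pedge vs j \<subseteq>
    (if j = Suc i then {vs ! j} else if i = 0 \<and> Suc j = length vs then {vs ! 0} else {})"
proof -
  have "length vs \<ge> 3" using assms(1) by (simp add: simple_polygon_def)
  moreover have "Suc i mod length vs = Suc i" using assms(2,3) by simp
  moreover have "Suc j mod length vs = (if Suc j = length vs then 0 else Suc j)"
    using assms(3) by simp
  moreover have "if j = Suc i mod length vs then pedge vs i \<inter> pedge vs j = {pvert vs j}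
      else if i = Suc j mod length vs then pedge vs i \<inter> pedge vs j = {pvert vs i}
      else pedge vs i \<inter> pedge vs j = {}"
    using assms unfolding simple_polygon_def by auto
  ultimately show ?thesis using assms(2,3) by (auto simp: pvert_def split: if_splits)
qed

lemma simple_polygon_simple_chain:
  assumes polygon: "simple_polygon vs"
  shows "simple_chain vs"
  unfolding simple_chain_def
proof (intro conjI allI impI)
  show "vs ! i \<noteq> vs ! Suc i" if "i < length vs - 1" for i
    using polygon that by (simp add: simple_polygon_def nth_eq_iff_index_eq)
  fix i j assume ij: "i < j \<and> j < length vs - 1"
  then have "pedge vs i = closed_segment (vs ! i) (vs ! Suc i)"
    "pedge vs j = closed_segment (vs ! j) (vs ! Suc j)" by (auto intro!: pedge_conv_closed_segment)
  moreover have "i < j" "j < length vs" "Suc j \<noteq> length vs" using ij by auto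
  ultimately show "closed_segment (vs ! i) (vs ! Suc i) \<inter> closed_segment (vs ! j) (vs ! Suc j)
      \<subseteq> (if j = Suc i then {vs ! j} else {})"
    using simple_polygon_edges_meet[OF polygon \<open>i < j\<close> \<open>j < length vs\<close>] by (cases "j = Suc i") auto
qed

lemma simple_polygon_closing_edge:
  assumes polygon: "simple_polygon vs"
  shows "(\<Union>i < length vs - 1. closed_segment (vs ! i) (vs ! Suc i)) \<inter> closed_segment (last vs) (hd vs)
    \<subseteq> {hd vs, last vs}"
proof
  let ?n = "length vs"
  have n: "?n \<ge> 3" using polygon by (simp add: simple_polygon_def)
  fix x assume x: "x \<in> (\<Union>i < ?n - 1. closed_segment (vs ! i) (vs ! Suc i)) \<inter> closed_segment (last vs) (hd vs)"
  then obtain i where i: "i < ?n - 1" "x \<in> pedge vs i" by (auto simp: pedge_conv_closed_segment)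
  moreover have "x \<in> pedge vs (?n - 1)" using x n pedge_last[of vs] by simp
  moreover have "?n - 1 < ?n" "vs \<noteq> []" using n by auto
  then have "pedge vs i \<inter> pedge vs (?n - 1) \<subseteq> {hd vs, last vs}"
    using simple_polygon_edges_meet[OF polygon i(1)] n
    by (auto simp: hd_conv_nth last_conv_nth split: if_splits)
  ultimately show "x \<in> {hd vs, last vs}" by blast
qed

lemma polygon_boundary_eq:
  assumes "length vs \<ge> 2"
  shows "polygon_boundary vs =
    (\<Union>i < length vs - 1. closed_segment (vs ! i) (vs ! Suc i)) \<union> closed_segment (last vs) (hd vs)"
proof -
  have "{..<length vs} = insert (length vs - 1) {..<length vs - 1}" using assms by auto
  then have "polygon_boundary vs = (\<Union>i < length vs - 1. pedge vs i) \<union> pedge vs (length vs - 1)"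
    unfolding polygon_boundary_def by auto
  moreover have "(\<Union>i < length vs - 1. pedge vs i) = (\<Union>i < length vs - 1. closed_segment (vs ! i) (vs ! Suc i))"
    by (auto simp: pedge_conv_closed_segment)
  ultimately show ?thesis using assms pedge_last[of vs] by simp
qed

lemma simple_polygon_loop:
  assumes polygon: "simple_polygon vs"
  obtains g where "simple_path g" "pathfinish g = pathstart g" "path_image g = polygon_boundary vs"
proof -
  have n: "length vs \<ge> 3" and "distinct vs" using polygon by (auto simp: simple_polygon_def)
  have chain: "arc (polyline vs) \<and>
      path_image (polyline vs) = (\<Union>i < length vs - 1. closed_segment (vs ! i) (vs ! Suc i)) \<and>
      pathstart (polyline vs) = hd vs \<and> pathfinish (polyline vs) = last vs"
    using arc_polyline[OF simple_polygon_simple_chain[OF polygon]] n by simp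
  have "last vs \<noteq> hd vs" using \<open>distinct vs\<close> n by (cases vs) (auto dest: last_in_set)
  then have "simple_path (polyline vs +++ linepath (last vs) (hd vs))"
    using chain simple_polygon_closing_edge[OF polygon]
    by (auto intro!: simple_path_join_loop simp: arc_linepath)
  moreover have "polygon_boundary vs = path_image (polyline vs +++ linepath (last vs) (hd vs))"
    using chain n by (simp add: path_image_join polygon_boundary_eq)
  ultimately show ?thesis using that chain by simp
qed

lemma polygon_region_topology:
  assumes "simple_polygon vs"
  shows "compact (polygon_region vs) \<and> polygon_region vs \<subseteq> closure (interior (polygon_region vs)) \<and>
    interior (polygon_region vs) \<noteq> {}"
proof -
  obtain g where g: "simple_path g" "pathfinish g = pathstart g" "path_image g = polygon_boundary vs"
    using simple_polygon_loop[OF assms] .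
  let ?B = "path_image g"
  have region: "polygon_region vs = ?B \<union> inside ?B" using g(3) by (simp add: polygon_region_def)
  have path: "path g" using g(1) simple_path_imp_path by blast
  have "inside ?B \<subseteq> interior (polygon_region vs)"
    using open_inside[OF closed_path_image[OF path]] region by (simp add: interior_maximal)
  moreover have "polygon_region vs \<subseteq> closure (inside ?B)"
    using region inside_simple_loop[OF g(1,2)] closure_subset by blast
  moreover have "compact (polygon_region vs)"
    using closed_path_image_Un_inside[OF path] bounded_inside[OF bounded_path_image[OF path]]
      bounded_path_image[OF path] region
    by (simp add: compact_eq_bounded_closed)
  ultimately show ?thesis using inside_simple_loop[OF g(1,2)] closure_mono by blast
qed

section \<open>Skeletons and diagonals\<close>

lemma compact_subset_bounding_box:
  assumes "compact \<omega>"
  shows "\<omega> \<subseteq> cbox (xmin \<omega>, ymin \<omega>) (xmax \<omega>, ymax \<omega>)"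
proof
  fix z assume "z \<in> \<omega>"
  then have "fst z \<in> fst ` \<omega>" "snd z \<in> snd ` \<omega>" by simp_all
  moreover have "bounded (fst ` \<omega>)" "bounded (snd ` \<omega>)"
    using compact_imp_bounded[OF assms] by (simp_all add: bounded_fst bounded_snd)
  ultimately have "xmin \<omega> \<le> fst z \<and> fst z \<le> xmax \<omega> \<and> ymin \<omega> \<le> snd z \<and> snd z \<le> ymax \<omega>"
    unfolding xmin_def xmax_def ymin_def ymax_def
    by (auto intro!: cInf_lower cSup_upper bounded_imp_bdd_below bounded_imp_bdd_above)
  then show "z \<in> cbox (xmin \<omega>, ymin \<omega>) (xmax \<omega>, ymax \<omega>)" by (cases z) simp
qed

lemma opposite_extreme_corners_rect_hull:
  assumes "opposite_extreme_corners \<omega> c d" "compact \<omega>"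
  shows "\<omega> \<subseteq> rect_hull c d"
proof -
  have "xmin \<omega> \<le> xmax \<omega>" "ymin \<omega> \<le> ymax \<omega>"
    using assms compact_subset_bounding_box[OF assms(2)]
    by (auto simp: opposite_extreme_corners_def)
  then have "rect_hull c d = cbox (xmin \<omega>, ymin \<omega>) (xmax \<omega>, ymax \<omega>)"
    using assms(1) by (auto simp: opposite_extreme_corners_def rect_hull_def doubleton_eq_iff)
  then show ?thesis using compact_subset_bounding_box[OF assms(2)] by simp
qed

lemma opposite_extreme_cornersI:
  assumes "\<omega> \<subseteq> rect_hull a b" "a \<in> \<omega>" "b \<in> \<omega>"
  shows "opposite_extreme_corners \<omega> a b"
proof -
  have "xmin \<omega> = min (fst a) (fst b)" "xmax \<omega> = max (fst a) (fst b)"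
    "ymin \<omega> = min (snd a) (snd b)" "ymax \<omega> = max (snd a) (snd b)"
    unfolding xmin_def xmax_def ymin_def ymax_def
    using assms by (auto simp: mem_rect_hull min_def max_def intro!: cInf_eq_minimum cSup_eq_maximum)
  then show ?thesis
    using assms(2,3) by (cases a, cases b) (auto simp: opposite_extreme_corners_def min_def max_def)
qed

lemma skeleton_meets_aligned_crossing:
  assumes "skeleton \<omega> S" "p \<notin> \<omega>" "q \<notin> \<omega>" "axis_parallel p q"
    and "z \<in> closed_segment p q" "z \<in> interior \<omega>"
  shows "\<exists>s\<in>S. closed_segment p q \<inter> s \<noteq> {}"
proof -
  have "p \<notin> interior \<omega>" "q \<notin> interior \<omega>" using assms(2,3) interior_subset by blast+
  then show ?thesis
    using assms L_corners_aligned[OF assms(4)] unfolding skeleton_iff_L_shapes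
    by (metis disjoint_iff L_corners_def insertI1)
qed

lemma skeleton_meets_lines_through_interior:
  assumes "skeleton \<omega> S" "compact \<omega>" "z \<in> interior \<omega>"
  shows "(\<exists>s\<in>S. \<exists>w\<in>s. fst w = fst z) \<and> (\<exists>s\<in>S. \<exists>w\<in>s. snd w = snd z)"
proof -
  have box: "\<omega> \<subseteq> cbox (xmin \<omega>, ymin \<omega>) (xmax \<omega>, ymax \<omega>)"
    using compact_subset_bounding_box[OF assms(2)] .
  then have z: "z \<in> cbox (xmin \<omega>, ymin \<omega>) (xmax \<omega>, ymax \<omega>)" using assms(3) interior_subset by blast
  let ?p = "(fst z, ymin \<omega> - 1)" and ?q = "(fst z, ymax \<omega> + 1)"
  have "z \<in> rect_hull ?p ?q" using z by (cases z) (auto simp: mem_rect_hull)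
  then obtain s w where "s \<in> S" "w \<in> s" "w \<in> rect_hull ?p ?q"
    using skeleton_meets_aligned_crossing[OF assms(1), of ?p ?q z] box assms(3)
    by (force simp: axis_parallel_def rect_hull_eq_closed_segment)
  moreover from \<open>w \<in> rect_hull ?p ?q\<close> have "fst w = fst z" by (simp add: mem_rect_hull)
  ultimately have vertical: "\<exists>s\<in>S. \<exists>w\<in>s. fst w = fst z" by blast
  let ?p' = "(xmin \<omega> - 1, snd z)" and ?q' = "(xmax \<omega> + 1, snd z)"
  have "z \<in> rect_hull ?p' ?q'" using z by (cases z) (auto simp: mem_rect_hull)
  then obtain s' w' where "s' \<in> S" "w' \<in> s'" "w' \<in> rect_hull ?p' ?q'"
    using skeleton_meets_aligned_crossing[OF assms(1), of ?p' ?q' z] box assms(3)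
    by (force simp: axis_parallel_def rect_hull_eq_closed_segment)
  moreover from \<open>w' \<in> rect_hull ?p' ?q'\<close> have "snd w' = snd z" by (simp add: mem_rect_hull)
  ultimately have "\<exists>s\<in>S. \<exists>w\<in>s. snd w = snd z" by blast
  with vertical show ?thesis ..
qed

lemma nondegenerate_if_interior:
  assumes "\<omega> \<subseteq> rect_hull c d" "interior \<omega> \<noteq> {}"
  shows "fst c \<noteq> fst d" "snd c \<noteq> snd d"
proof -
  have "interior (rect_hull c d) \<noteq> {}" using assms interior_mono by blast
  then show "fst c \<noteq> fst d" "snd c \<noteq> snd d"
    by (auto simp: rect_hull_def interior_cbox box_ne_empty Basis_prod_def)
qed

lemma rect_convex_obstacle_properties:
  assumes "rect_convex_obstacle \<omega>"
  shows "compact \<omega>" "\<omega> \<subseteq> closure (interior \<omega>)" "interior \<omega> \<noteq> {}" "orth_convex \<omega>"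
proof -
  obtain vs where "simple_polygon vs" "\<omega> = polygon_region vs"
    using assms by (auto simp: rect_convex_obstacle_def rectilinear_obstacle_def)
  then show "compact \<omega>" "\<omega> \<subseteq> closure (interior \<omega>)" "interior \<omega> \<noteq> {}"
    using polygon_region_topology by blast+
  show "orth_convex \<omega>"
    using assms rect_convex_imp_orth_convex by (simp add: rect_convex_obstacle_def)
qed

lemma skeleton_nonempty:
  assumes "skeleton \<omega> S" "compact \<omega>" "interior \<omega> \<noteq> {}"
  shows "S \<noteq> {}"
  using skeleton_meets_lines_through_interior[OF assms(1,2)] assms(3) by blast

lemma single_segment_skeleton_diagonal:
  assumes sk: "skeleton \<omega> {s}" and "compact \<omega>" "\<omega> \<subseteq> closure (interior \<omega>)"
  shows "has_diagonal \<omega>"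
proof -
  obtain a b where s: "s = closed_segment a b" "closed_segment a b \<subseteq> \<omega>"
    using sk by (auto simp: skeleton_def is_segment_def)
  have "interior \<omega> \<subseteq> rect_hull a b"
  proof
    fix z assume "z \<in> interior \<omega>"
    then obtain w w' where "w \<in> s" "w' \<in> s" "fst w = fst z" "snd w' = snd z"
      using skeleton_meets_lines_through_interior[OF sk assms(2) \<open>z \<in> interior \<omega>\<close>] by blast
    then show "z \<in> rect_hull a b"
      using closed_segment_subset_rect_hull[of a b] s(1) by (auto simp: mem_rect_hull)
  qed
  then have "\<omega> \<subseteq> rect_hull a b"
    using assms(3) closure_minimal[of "interior \<omega>" "rect_hull a b"] by (auto simp: rect_hull_def)
  then have "opposite_extreme_corners \<omega> a b"
    using s(2) by (intro opposite_extreme_cornersI) auto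
  then show ?thesis using s(2) unfolding has_diagonal_def by blast
qed

lemma diagonal_skeleton:
  assumes "orth_convex \<omega>" "compact \<omega>" "interior \<omega> \<noteq> {}"
    and corners: "opposite_extreme_corners \<omega> c d" and diagonal: "closed_segment c d \<subseteq> \<omega>"
  shows "skeleton \<omega> {closed_segment c d}"
proof -
  have box: "\<omega> \<subseteq> rect_hull c d" by (rule opposite_extreme_corners_rect_hull[OF corners assms(2)])
  note nondegenerate = nondegenerate_if_interior[OF box assms(3)]
  then have "is_segment (closed_segment c d)" unfolding is_segment_def by (metis prod.inject)
  then show ?thesis
    unfolding skeleton_iff_L_shapes
    using L_shape_meets_diagonal[OF assms(1) box diagonal nondegenerate] diagonal by auto
qed

theorem lemma5:
  fixes \<omega> :: "(real \<times> real) set" and S :: "(real \<times> real) set set"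
  assumes "rect_convex_obstacle \<omega>"
    and "minimum_skeleton \<omega> S"
  shows "card S = 1 \<longleftrightarrow> has_diagonal \<omega>"
proof -
  note \<omega> = rect_convex_obstacle_properties[OF assms(1)]
  have sk: "skeleton \<omega> S" and minimal: "\<And>S'. skeleton \<omega> S' \<Longrightarrow> card S \<le> card S'"
    using assms(2) by (auto simp: minimum_skeleton_def)
  show ?thesis
  proof
    assume "card S = 1"
    then obtain s where "S = {s}" by (rule card_1_singletonE)
    then show "has_diagonal \<omega>" using single_segment_skeleton_diagonal sk \<omega>(1,2) by blast
  next
    assume "has_diagonal \<omega>"
    then obtain c d where "opposite_extreme_corners \<omega> c d" "closed_segment c d \<subseteq> \<omega>"
      by (auto simp: has_diagonal_def)
    then have "card S \<le> 1"
      using minimal[OF diagonal_skeleton[OF \<omega>(4,1,3)]] by simp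
    moreover have "card S \<noteq> 0"
      using skeleton_nonempty[OF sk \<omega>(1,3)] sk by (simp add: skeleton_def)
    ultimately show "card S = 1" by linarith
  qed
qed

end
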